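(* Let $G$ be a finitely generated group, $U$ a finite symmetric generating set of $G$, and $H\leqslant G$ with $[G:H]=d$. Suppose there exist $\alpha,\beta>0$ such that every finite symmetric generating set $V$ of $H$ satisfies $|V^n|\geqslant(\alpha|V|)^{\beta n}$ for every $n\in\mathbb{N}$. Let $m=2d!+1$. Then $$|U^n|\geqslant\bigg(\frac{\alpha}{2^{m/\beta}d}|U|\bigg)^{\frac{\beta n}{m}}$$ for every $n\in\mathbb{N}$.
   Context: $U^n=\{u_1\cdots u_n:u_i\in U\}$; symmetric means $U=U^{-1}$. *)

theory Defs
  imports Complex_Main "HOL-Algebra.Algebra"
begin

definition set_power :: "('a, 'b) monoid_scheme \<Rightarrow> 'a set \<Rightarrow> nat \<Rightarrow> 'a set" where
  "set_power G U n = {foldr (\<otimes>\<^bsub>G\<^esub>) us \<one>\<^bsub>G\<^esub> | us. length us = n \<and> set us \<subseteq> U}"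

definition symmetric_set :: "('a, 'b) monoid_scheme \<Rightarrow> 'a set \<Rightarrow> bool" where
  "symmetric_set G U \<longleftrightarrow> (\<lambda>x. inv\<^bsub>G\<^esub> x) ` U = U"

end

theory Submission
  imports Defs
begin

text \<open>
  Let \<open>B\<^sub>k\<close> be the set of products of at most \<open>k\<close> elements of \<open>U\<close>. The
  cosets \<open>H b\<close> with \<open>b \<in> B\<^sub>j\<close> increase strictly with \<open>j\<close> until they exhaust all
  \<open>d\<close> cosets, so \<open>B\<^sub>t\<close> meets every coset once \<open>t \<ge> d - 1\<close>; a Schreier-type
  rewriting then shows that \<open>V = H \<inter> B\<^sub>m\<close>, \<open>m = 2t + 1\<close>, generates \<open>H\<close>. Some
  coset contains at least \<open>|U|/d\<close> elements of \<open>U\<close>, and translating them into \<open>H\<close>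
  gives \<open>|V| \<ge> |U|/d\<close>. Since \<open>V\<^sup>n \<subseteq> B\<^sub>m\<^sub>n\<close>, we get
  \<open>(\<alpha>|U|/d)\<^bsup>\<beta>n\<^esup> \<le> |V\<^sup>n| \<le> (mn + 1) |U\<^sup>n|\<^sup>m \<le> 2\<^bsup>mn\<^esup> |U\<^sup>n|\<^sup>m\<close>, and the claim
  follows by taking \<open>m\<close>-th roots.
\<close>

context monoid
begin

lemma set_power_0 [simp]: "set_power G U 0 = {\<one>}"
  by (auto simp: set_power_def)

lemma set_power_Suc: "set_power G U (Suc n) = {u \<otimes> w | u w. u \<in> U \<and> w \<in> set_power G U n}"
proof (intro Set.set_eqI iffI)
  fix x assume "x \<in> set_power G U (Suc n)"
  then obtain us where "length us = Suc n" "set us \<subseteq> U" "x = foldr (\<otimes>) us \<one>"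
    by (auto simp: set_power_def)
  then show "x \<in> {u \<otimes> w | u w. u \<in> U \<and> w \<in> set_power G U n}"
    by (cases us) (auto simp: set_power_def)
next
  fix x assume "x \<in> {u \<otimes> w | u w. u \<in> U \<and> w \<in> set_power G U n}"
  then obtain u us where "u \<in> U" "length us = n" "set us \<subseteq> U" "x = u \<otimes> foldr (\<otimes>) us \<one>"
    by (auto simp: set_power_def)
  then show "x \<in> set_power G U (Suc n)"
    unfolding set_power_def by (intro CollectI exI[of _ "u # us"]) auto
qed

lemma set_power_closed: "U \<subseteq> carrier G \<Longrightarrow> set_power G U n \<subseteq> carrier G"
  by (induction n) (auto simp: set_power_Suc)

lemma set_power_1: "U \<subseteq> carrier G \<Longrightarrow> set_power G U 1 = U"
  by (auto simp: set_power_Suc) (metis r_one subsetD)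

lemma set_power_add:
  assumes "U \<subseteq> carrier G"
  shows "set_power G U (a + b) = {x \<otimes> y | x y. x \<in> set_power G U a \<and> y \<in> set_power G U b}"
proof (induction a)
  case 0
  then show ?case using set_power_closed[OF assms, of b] by force
next
  case (Suc a)
  have "u \<otimes> (x \<otimes> y) = (u \<otimes> x) \<otimes> y"
    if "u \<in> U" "x \<in> set_power G U a" "y \<in> set_power G U b" for u x y
    using that assms set_power_closed[OF assms] by (metis m_assoc subsetD)
  then show ?case
    unfolding add_Suc set_power_Suc Suc by (auto; metis)
qed

lemma set_power_mult_closed:
  "\<lbrakk>U \<subseteq> carrier G; x \<in> set_power G U a; y \<in> set_power G U b\<rbrakk>
    \<Longrightarrow> x \<otimes> y \<in> set_power G U (a + b)"
  using set_power_add by blast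

lemma set_power_Suc_right:
  "U \<subseteq> carrier G \<Longrightarrow> set_power G U (Suc n) = {w \<otimes> u | w u. w \<in> set_power G U n \<and> u \<in> U}"
  using set_power_add[of U n 1] set_power_1[of U] by simp

lemma finite_set_power: "finite U \<Longrightarrow> finite (set_power G U n)"
proof (induction n)
  case (Suc n)
  have "set_power G U (Suc n) = (\<lambda>(u, w). u \<otimes> w) ` (U \<times> set_power G U n)"
    by (auto simp: set_power_Suc)
  then show ?case using Suc by simp
qed simp

lemma set_power_nonempty: "U \<noteq> {} \<Longrightarrow> set_power G U n \<noteq> {}"
  by (induction n) (auto simp: set_power_Suc)

lemma card_set_power_add_le:
  assumes "U \<subseteq> carrier G" "finite U"
  shows "card (set_power G U (a + b)) \<le> card (set_power G U a) * card (set_power G U b)"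
proof -
  have "set_power G U (a + b) = (\<lambda>(x, y). x \<otimes> y) ` (set_power G U a \<times> set_power G U b)"
    using set_power_add[OF assms(1)] by auto
  then show ?thesis
    by (metis card_cartesian_product card_image_le finite_SigmaI finite_set_power assms(2))
qed

lemma card_set_power_mult_le:
  assumes "U \<subseteq> carrier G" "finite U"
  shows "card (set_power G U (k * n)) \<le> card (set_power G U n) ^ k"
proof (induction k)
  case (Suc k)
  have "card (set_power G U (n + k * n)) \<le> card (set_power G U n) * card (set_power G U (k * n))"
    by (rule card_set_power_add_le[OF assms])
  with Suc show ?case by (simp add: le_trans)
qed simp

end

context group
begin

lemma symmetric_set_inv_closed: "\<lbrakk>symmetric_set G U; u \<in> U\<rbrakk> \<Longrightarrow> inv u \<in> U"
  unfolding symmetric_set_def by blast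

lemma symmetric_setI:
  assumes "U \<subseteq> carrier G" "\<And>u. u \<in> U \<Longrightarrow> inv u \<in> U"
  shows "symmetric_set G U"
  unfolding symmetric_set_def
proof (intro Set.set_eqI iffI)
  fix u assume "u \<in> U"
  then have "u = inv (inv u)" using assms(1) by auto
  then show "u \<in> (\<lambda>x. inv x) ` U" using assms(2) \<open>u \<in> U\<close> by blast
qed (use assms(2) in blast)

lemma set_power_inv_closed:
  assumes "U \<subseteq> carrier G" "symmetric_set G U"
  shows "x \<in> set_power G U n \<Longrightarrow> inv x \<in> set_power G U n"
proof (induction n arbitrary: x)
  case (Suc n)
  then obtain u w where uw: "u \<in> U" "w \<in> set_power G U n" "x = u \<otimes> w"
    by (auto simp: set_power_Suc)
  have "inv w \<otimes> inv u \<in> set_power G U (Suc n)"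
    using Suc.IH[OF uw(2)] symmetric_set_inv_closed[OF assms(2) uw(1)]
    by (auto simp: set_power_Suc_right[OF assms(1)])
  moreover have "u \<in> carrier G" "w \<in> carrier G"
    using uw assms(1) set_power_closed[OF assms(1)] by auto
  ultimately show ?case using uw(3) by (simp add: inv_mult_group)
qed simp

lemma generate_subset_UN_set_power:
  assumes "U \<subseteq> carrier G" "symmetric_set G U"
  shows "generate G U \<subseteq> (\<Union>n. set_power G U n)"
proof
  fix x assume "x \<in> generate G U"
  then show "x \<in> (\<Union>n. set_power G U n)"
  proof (induction rule: generate.induct)
    case one
    then show ?case using set_power_0 by blast
  next
    case (incl h)
    then show ?case using set_power_1[OF assms(1)] by blast
  next
    case (inv h)
    then show ?case using set_power_1[OF assms(1)] symmetric_set_inv_closed[OF assms(2)] by blast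
  next
    case (eng h1 h2)
    then show ?case using set_power_mult_closed[OF assms(1)] by blast
  qed
qed

lemma card_set_power_mono:
  assumes "U \<subseteq> carrier G" "finite U" "U \<noteq> {}" "a \<le> b"
  shows "card (set_power G U a) \<le> card (set_power G U b)"
proof -
  obtain k where b: "b = a + k" using assms(4) le_Suc_ex by blast
  obtain w where w: "w \<in> set_power G U k" using set_power_nonempty[OF assms(3)] by blast
  have "inj_on (\<lambda>x. x \<otimes> w) (set_power G U a)"
    using w set_power_closed[OF assms(1)] by (intro inj_onI) (metis r_cancel subsetD)
  moreover have "(\<lambda>x. x \<otimes> w) ` set_power G U a \<subseteq> set_power G U b"
    using b w set_power_mult_closed[OF assms(1)] by auto
  ultimately show ?thesis using card_inj_on_le finite_set_power[OF assms(2)] by blast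
qed

end

definition word_ball :: "('a, 'b) monoid_scheme \<Rightarrow> 'a set \<Rightarrow> nat \<Rightarrow> 'a set" where
  "word_ball G U k = (\<Union>i\<le>k. set_power G U i)"

context group
begin

lemma set_power_subset_word_ball: "set_power G U k \<subseteq> word_ball G U k"
  unfolding word_ball_def by auto

lemma one_in_word_ball: "\<one> \<in> word_ball G U k"
  unfolding word_ball_def by force

lemma word_ball_mono: "a \<le> b \<Longrightarrow> word_ball G U a \<subseteq> word_ball G U b"
  unfolding word_ball_def by (auto intro: order_trans)

lemma word_ball_closed: "U \<subseteq> carrier G \<Longrightarrow> word_ball G U k \<subseteq> carrier G"
  using set_power_closed by (auto simp: word_ball_def)

lemma finite_word_ball: "finite U \<Longrightarrow> finite (word_ball G U k)"
  unfolding word_ball_def using finite_set_power by auto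

lemma generator_in_word_ball: "\<lbrakk>U \<subseteq> carrier G; u \<in> U\<rbrakk> \<Longrightarrow> u \<in> word_ball G U 1"
  using set_power_1 set_power_subset_word_ball by blast

lemma word_ball_mult_closed:
  assumes "U \<subseteq> carrier G" "x \<in> word_ball G U a" "y \<in> word_ball G U b"
  shows "x \<otimes> y \<in> word_ball G U (a + b)"
proof -
  obtain i j where "i \<le> a" "j \<le> b" "x \<in> set_power G U i" "y \<in> set_power G U j"
    using assms(2,3) unfolding word_ball_def by blast
  then have "x \<otimes> y \<in> set_power G U (i + j)" "i + j \<le> a + b"
    using set_power_mult_closed[OF assms(1)] by auto
  then show ?thesis unfolding word_ball_def by blast
qed

lemma word_ball_inv_closed:
  "\<lbrakk>U \<subseteq> carrier G; symmetric_set G U; x \<in> word_ball G U k\<rbrakk> \<Longrightarrow> inv x \<in> word_ball G U k"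
  unfolding word_ball_def using set_power_inv_closed by blast

lemma card_word_ball_le:
  assumes "U \<subseteq> carrier G" "finite U" "U \<noteq> {}"
  shows "card (word_ball G U k) \<le> (k + 1) * card (set_power G U k)"
proof -
  have "card (word_ball G U k) \<le> (\<Sum>i\<le>k. card (set_power G U i))"
    unfolding word_ball_def by (rule card_UN_le) simp
  also have "\<dots> \<le> (\<Sum>i\<le>k. card (set_power G U k))"
    by (intro sum_mono card_set_power_mono assms) auto
  finally show ?thesis by simp
qed

lemma set_power_subset_word_ball_mult:
  assumes "U \<subseteq> carrier G" "V \<subseteq> word_ball G U c"
  shows "set_power G V n \<subseteq> word_ball G U (c * n)"
proof (induction n)
  case 0
  then show ?case using one_in_word_ball by simp
next
  case (Suc n)
  then show ?case
    using word_ball_mult_closed[OF assms(1)] assms(2) by (fastforce simp: set_power_Suc)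
qed

lemma card_set_power_le_of_subset_word_ball:
  assumes "U \<subseteq> carrier G" "finite U" "U \<noteq> {}" "V \<subseteq> word_ball G U c"
  shows "card (set_power G V n) \<le> (c * n + 1) * card (set_power G U n) ^ c"
proof -
  have "card (set_power G V n) \<le> card (word_ball G U (c * n))"
    using set_power_subset_word_ball_mult[OF assms(1,4)] by (intro card_mono finite_word_ball assms)
  also have "\<dots> \<le> (c * n + 1) * card (set_power G U (c * n))"
    by (rule card_word_ball_le[OF assms(1-3)])
  also have "\<dots> \<le> (c * n + 1) * card (set_power G U n) ^ c"
    using card_set_power_mult_le[OF assms(1,2)] by (intro mult_le_mono2)
  finally show ?thesis .
qed

end

lemma exists_card_Int_ge:
  assumes "finite P" "P \<noteq> {}" "A \<subseteq> \<Union>P"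
  shows "\<exists>C\<in>P. card A \<le> card P * card (A \<inter> C)"
proof -
  let ?M = "Max ((\<lambda>C. card (A \<inter> C)) ` P)"
  have "?M \<in> (\<lambda>C. card (A \<inter> C)) ` P" using assms(1,2) by (intro Max_in) auto
  then obtain C where C: "C \<in> P" "card (A \<inter> C) = ?M" by auto
  have "card A = card (\<Union>C'\<in>P. A \<inter> C')"
    using assms(3) by (metis Int_Union inf.absorb_iff1)
  also have "\<dots> \<le> (\<Sum>C'\<in>P. card (A \<inter> C'))"
    by (rule card_UN_le[OF assms(1)])
  also have "\<dots> \<le> card P * card (A \<inter> C)"
  proof -
    have "card (A \<inter> C') \<le> card (A \<inter> C)" if "C' \<in> P" for C'
      using C(2) assms(1) that by simp
    then have "(\<Sum>C'\<in>P. card (A \<inter> C')) \<le> of_nat (card P) * card (A \<inter> C)"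
      by (rule sum_bounded_above)
    then show ?thesis by simp
  qed
  finally show ?thesis using C(1) by blast
qed

context group
begin

lemma rcosets_word_ball_stable:
  assumes U: "U \<subseteq> carrier G" "symmetric_set G U" "generate G U = carrier G"
    and H: "subgroup H G"
    and stable: "(\<lambda>b. H #> b) ` word_ball G U (Suc j) \<subseteq> (\<lambda>b. H #> b) ` word_ball G U j"
  shows "(\<lambda>b. H #> b) ` word_ball G U j = rcosets H"
proof
  have Hc: "H \<subseteq> carrier G" using subgroup.subset[OF H] .
  show "(\<lambda>b. H #> b) ` word_ball G U j \<subseteq> rcosets H"
    using word_ball_closed[OF U(1)] rcosetsI[OF Hc] by blast
  have reached: "H #> w \<in> (\<lambda>b. H #> b) ` word_ball G U j" if "w \<in> set_power G U n" for n w
    using that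
  proof (induction n arbitrary: w)
    case 0
    then show ?case using one_in_word_ball by auto
  next
    case (Suc n)
    then obtain w' u where wu: "w' \<in> set_power G U n" "u \<in> U" "w = w' \<otimes> u"
      by (auto simp: set_power_Suc_right[OF U(1)])
    then obtain b where b: "b \<in> word_ball G U j" "H #> w' = H #> b"
      using Suc.IH by blast
    have "w' \<in> carrier G" "u \<in> carrier G" "b \<in> carrier G"
      using wu b set_power_closed[OF U(1)] word_ball_closed[OF U(1)] U(1) by blast+
    then have "H #> w = H #> (b \<otimes> u)"
      using wu(3) b(2) Hc by (metis coset_mult_assoc)
    moreover have "b \<otimes> u \<in> word_ball G U (Suc j)"
      using word_ball_mult_closed[OF U(1) b(1) generator_in_word_ball[OF U(1) wu(2)]] by simp
    ultimately show ?case using stable by blast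
  qed
  show "rcosets H \<subseteq> (\<lambda>b. H #> b) ` word_ball G U j"
  proof
    fix Y assume "Y \<in> rcosets H"
    then obtain g where "g \<in> carrier G" "Y = H #> g" unfolding RCOSETS_def by blast
    then show "Y \<in> (\<lambda>b. H #> b) ` word_ball G U j"
      using reached generate_subset_UN_set_power[OF U(1,2)] U(3) by blast
  qed
qed

lemma rcosets_eq_image_word_ball:
  assumes U: "U \<subseteq> carrier G" "symmetric_set G U" "generate G U = carrier G"
    and H: "subgroup H G" "card (rcosets H) = d" "1 \<le> d"
  shows "(\<lambda>b. H #> b) ` word_ball G U (d - 1) = rcosets H"
proof -
  let ?C = "\<lambda>j. (\<lambda>b. H #> b) ` word_ball G U j"
  have fin: "finite (rcosets H)" using H(2,3) by (intro card_ge_0_finite) simp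
  have sub: "?C j \<subseteq> rcosets H" for j
    using word_ball_closed[OF U(1)] rcosetsI[OF subgroup.subset[OF H(1)]] by blast
  have grow: "?C j = rcosets H \<or> j + 1 \<le> card (?C j)" for j
  proof (induction j)
    case 0
    have "?C 0 \<noteq> {}" using one_in_word_ball by blast
    then have "0 < card (?C 0)" using finite_subset[OF sub fin] card_gt_0_iff by blast
    then show ?case by (intro disjI2) simp
  next
    case (Suc j)
    have mono: "?C j \<subseteq> ?C (Suc j)" by (intro image_mono word_ball_mono) simp
    show ?case
    proof (cases "?C j = rcosets H")
      case True
      have "?C (Suc j) = rcosets H"
        by (rule subset_antisym[OF sub]) (rule mono[unfolded True])
      then show ?thesis ..
    next
      case False
      have "?C j \<noteq> ?C (Suc j)"
      proof
        assume "?C j = ?C (Suc j)"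
        then have "?C (Suc j) \<subseteq> ?C j" by (rule equalityD2)
        with False show False using rcosets_word_ball_stable[OF U H(1)] by blast
      qed
      then have "?C j \<subset> ?C (Suc j)" by (rule psubsetI[OF mono])
      then have "card (?C j) < card (?C (Suc j))"
        by (rule psubset_card_mono[OF finite_subset[OF sub fin]])
      moreover have "j + 1 \<le> card (?C j)" using Suc.IH False by blast
      ultimately show ?thesis by (intro disjI2) linarith
    qed
  qed
  show ?thesis
  proof (cases "?C (d - 1) = rcosets H")
    case False
    with grow[of "d - 1"] have "d - 1 + 1 \<le> card (?C (d - 1))" by blast
    then have "card (rcosets H) \<le> card (?C (d - 1))" using H(2,3) by linarith
    then show ?thesis by (rule card_seteq[OF fin sub])
  qed
qed

lemma word_ball_meets_rcosets:
  assumes U: "U \<subseteq> carrier G" "symmetric_set G U" "generate G U = carrier G"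
    and H: "subgroup H G" "card (rcosets H) = d" "1 \<le> d"
    and t: "d - 1 \<le> t" and g: "g \<in> carrier G"
  shows "\<exists>b\<in>word_ball G U t. g \<in> H #> b"
proof -
  have "H #> g \<in> rcosets H" using rcosetsI[OF subgroup.subset[OF H(1)] g] .
  then obtain b where "b \<in> word_ball G U (d - 1)" "H #> g = H #> b"
    using rcosets_eq_image_word_ball[OF U H] by (metis imageE)
  then show ?thesis using rcos_self[OF g H(1)] word_ball_mono[OF t] by auto
qed

lemma factor_generate_Int_word_ball:
  assumes U: "U \<subseteq> carrier G" "symmetric_set G U" and H: "subgroup H G"
    and meets: "\<And>g. g \<in> carrier G \<Longrightarrow> \<exists>b\<in>word_ball G U t. g \<in> H #> b"
    and w: "w \<in> set_power G U n"
  shows "\<exists>k\<in>generate G (H \<inter> word_ball G U (2 * t + 1)). \<exists>s\<in>word_ball G U t. w = k \<otimes> s"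
  using w
proof (induction n arbitrary: w)
  case 0
  then have "w = \<one> \<otimes> \<one>" by simp
  then show ?case using generate.one one_in_word_ball by blast
next
  case (Suc n)
  let ?K = "generate G (H \<inter> word_ball G U (2 * t + 1))"
  obtain w' u where wu: "w' \<in> set_power G U n" "u \<in> U" "w = w' \<otimes> u"
    using Suc.prems by (auto simp: set_power_Suc_right[OF U(1)])
  obtain k s where ks: "k \<in> ?K" "s \<in> word_ball G U t" "w' = k \<otimes> s"
    using Suc.IH[OF wu(1)] by blast
  have c: "k \<in> carrier G" "s \<in> carrier G" "u \<in> carrier G"
    using ks wu(2) U(1) word_ball_closed[OF U(1)] generate_in_carrier[of "H \<inter> _"]
      subgroup.subset[OF H] by blast+
  obtain b where b: "b \<in> word_ball G U t" "s \<otimes> u \<in> H #> b"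
    using meets c by blast
  have bc: "b \<in> carrier G" using b(1) word_ball_closed[OF U(1)] by blast
  define h where "h = (s \<otimes> u) \<otimes> inv b"
  have "h \<in> H"
    unfolding h_def using subgroup.rcos_module_imp[OF H is_group bc b(2)] .
  moreover have "h \<in> word_ball G U (2 * t + 1)"
  proof -
    have "s \<otimes> u \<in> word_ball G U (t + 1)"
      using word_ball_mult_closed[OF U(1) ks(2) generator_in_word_ball[OF U(1) wu(2)]] .
    from word_ball_mult_closed[OF U(1) this word_ball_inv_closed[OF U b(1)]]
    show ?thesis unfolding h_def by (simp add: mult_2)
  qed
  ultimately have "k \<otimes> h \<in> ?K" using ks(1) by (blast intro: generate.incl generate.eng)
  moreover have "w = (k \<otimes> h) \<otimes> b"
    using wu(3) ks(3) c bc unfolding h_def by (simp add: m_assoc)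
  ultimately show ?case using b(1) by blast
qed

lemma generate_Int_word_ball_eq_subgroup:
  assumes U: "U \<subseteq> carrier G" "symmetric_set G U" "generate G U = carrier G"
    and H: "subgroup H G"
    and meets: "\<And>g. g \<in> carrier G \<Longrightarrow> \<exists>b\<in>word_ball G U t. g \<in> H #> b"
  shows "generate G (H \<inter> word_ball G U (2 * t + 1)) = H"
proof
  let ?K = "generate G (H \<inter> word_ball G U (2 * t + 1))"
  show KH: "?K \<subseteq> H" by (rule generate_subgroup_incl[OF _ H]) blast
  show "H \<subseteq> ?K"
  proof
    fix h assume h: "h \<in> H"
    then obtain n where "h \<in> set_power G U n"
      using generate_subset_UN_set_power[OF U(1,2)] U(3) subgroup.subset[OF H] by blast
    then obtain k s where ks: "k \<in> ?K" "s \<in> word_ball G U t" "h = k \<otimes> s"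
      using factor_generate_Int_word_ball[OF U(1,2) H meets] by blast
    have k: "k \<in> H" "k \<in> carrier G" using ks(1) KH subgroup.subset[OF H] by blast+
    have "s \<in> carrier G" using ks(2) word_ball_closed[OF U(1)] by blast
    then have "s = inv k \<otimes> h" using ks(3) k(2) by (simp add: m_assoc[symmetric])
    then have "s \<in> H" using subgroup.m_closed[OF H subgroup.m_inv_closed[OF H k(1)] h] by simp
    moreover have "s \<in> word_ball G U (2 * t + 1)" using ks(2) word_ball_mono[of t "2 * t + 1" U] by auto
    ultimately have "s \<in> ?K" by (blast intro: generate.incl)
    then show "h \<in> ?K" using ks(1,3) generate.eng by metis
  qed
qed

lemma card_le_index_mult_card_Int_word_ball:
  assumes U: "finite U" "U \<subseteq> carrier G" "symmetric_set G U"
    and H: "subgroup H G" "finite (rcosets H)"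
  shows "card U \<le> card (rcosets H) * card (H \<inter> word_ball G U 2)"
proof -
  have Hc: "H \<subseteq> carrier G" using subgroup.subset[OF H(1)] .
  have "U \<subseteq> \<Union>(rcosets H)" "rcosets H \<noteq> {}"
    using rcosets_part_G[OF H(1)] U(2) rcosetsI[OF Hc one_closed] by auto
  then obtain C where C: "C \<in> rcosets H" "card U \<le> card (rcosets H) * card (U \<inter> C)"
    using exists_card_Int_ge[OF H(2)] by blast
  have "card (U \<inter> C) \<le> card (H \<inter> word_ball G U 2)"
  proof (cases "U \<inter> C = {}")
    case False
    then obtain u0 where u0: "u0 \<in> U" "u0 \<in> C" by blast
    have u0c: "u0 \<in> carrier G" using u0(1) U(2) by blast
    obtain g where g: "g \<in> carrier G" "C = H #> g" using C(1) unfolding RCOSETS_def by blast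
    have C_eq: "C = H #> u0" using repr_independence[OF _ g(1) H(1)] u0(2) g(2) by simp
    have "inj_on (\<lambda>u. u \<otimes> inv u0) (U \<inter> C)"
      using U(2) u0c by (intro inj_onI) (metis IntD1 inv_closed r_cancel subsetD)
    moreover have "(\<lambda>u. u \<otimes> inv u0) ` (U \<inter> C) \<subseteq> H \<inter> word_ball G U 2"
    proof safe
      fix u assume u: "u \<in> U" "u \<in> C"
      show "u \<otimes> inv u0 \<in> H"
        using subgroup.rcos_module_imp[OF H(1) is_group u0c] u(2) C_eq by simp
      have "u \<otimes> inv u0 \<in> word_ball G U (1 + 1)"
        using word_ball_mult_closed[OF U(2)] generator_in_word_ball[OF U(2)] u(1)
          symmetric_set_inv_closed[OF U(3) u0(1)] by blast
      then show "u \<otimes> inv u0 \<in> word_ball G U 2" by (simp add: numeral_2_eq_2)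
    qed
    moreover have "finite (H \<inter> word_ball G U 2)" using finite_word_ball[OF U(1)] by blast
    ultimately show ?thesis using card_inj_on_le by blast
  qed simp
  then show ?thesis using C(2) by (meson le_trans mult_le_mono2)
qed

lemma finite_index_subgroup_short_generators:
  assumes U: "finite U" "U \<subseteq> carrier G" "U \<noteq> {}" "symmetric_set G U" "generate G U = carrier G"
    and H: "subgroup H G" "card (rcosets H) = d" "1 \<le> d" and t: "d \<le> t"
  obtains V where "finite V" "V \<subseteq> H" "symmetric_set G V" "generate G V = H"
    and "card U \<le> d * card V"
    and "\<And>n. card (set_power G V n) \<le> ((2 * t + 1) * n + 1) * card (set_power G U n) ^ (2 * t + 1)"
proof
  let ?V = "H \<inter> word_ball G U (2 * t + 1)"
  show "finite ?V" using finite_word_ball[OF U(1)] by blast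
  show "?V \<subseteq> H" by blast
  show "symmetric_set G ?V"
    using subgroup.subset[OF H(1)] subgroup.m_inv_closed[OF H(1)] word_ball_inv_closed[OF U(2,4)]
    by (intro symmetric_setI) auto
  show "generate G ?V = H"
    using word_ball_meets_rcosets[OF U(2,4,5) H] t
    by (intro generate_Int_word_ball_eq_subgroup[OF U(2,4,5) H(1)]) auto
  have "card (H \<inter> word_ball G U 2) \<le> card ?V"
    using word_ball_mono[of 2 "2 * t + 1" U] t H(3) finite_word_ball[OF U(1)]
    by (intro card_mono) auto
  moreover have "finite (rcosets H)" using H(2,3) by (intro card_ge_0_finite) simp
  ultimately show "card U \<le> d * card ?V"
    using card_le_index_mult_card_Int_word_ball[OF U(1,2,4) H(1)] H(2)
    by (meson le_trans mult_le_mono2)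
  show "card (set_power G ?V n) \<le> ((2 * t + 1) * n + 1) * card (set_power G U n) ^ (2 * t + 1)"
    for n by (rule card_set_power_le_of_subset_word_ball[OF U(2,1,3)]) blast
qed

end

lemma powr_root_le_of_powr_le:
  fixes x L \<beta> :: real and m n :: nat
  assumes "0 \<le> x" "0 < \<beta>" "0 < m" "0 \<le> L"
    and "x powr (\<beta> * n) \<le> real (m * n + 1) * L ^ m"
  shows "(x / 2 powr (m / \<beta>)) powr (\<beta> * n / m) \<le> L"
proof (cases "x = 0")
  case False
  let ?y = "(x / 2 powr (m / \<beta>)) powr (\<beta> * n / m)"
  have "(2 powr (m / \<beta>)) powr (\<beta> * n / m) = 2 ^ n"
    using assms(2,3) by (simp add: powr_powr powr_realpow)
  then have y: "?y = x powr (\<beta> * n / m) / 2 ^ n"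
    by (simp add: powr_divide)
  have "?y ^ m = x powr (\<beta> * n) / 2 ^ (m * n)"
    using False assms(1,3) by (simp add: y power_divide powr_power mult.commute flip: power_mult)
  also have "\<dots> \<le> L ^ m"
  proof -
    have "real (m * n + 1) \<le> 2 ^ (m * n)"
      using less_exp[of "m * n"] by (metis Suc_eq_plus1 Suc_le_eq of_nat_le_iff of_nat_numeral of_nat_power)
    then have "x powr (\<beta> * n) \<le> 2 ^ (m * n) * L ^ m"
      using assms(4,5) by (meson order_trans mult_right_mono zero_le_power)
    then show ?thesis by (simp add: field_simps)
  qed
  finally show ?thesis
    using assms(3,4) power_le_imp_le_base[of ?y "m - 1" L] by simp
qed (use assms(4) in simp)

theorem proposition2p34:
  fixes G :: "('a, 'b) monoid_scheme" and U H :: "'a set" and d :: nat and \<alpha> \<beta> :: real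
  assumes "group G"
    and "finite U" and "U \<subseteq> carrier G" and "symmetric_set G U" and "generate G U = carrier G"
    and "subgroup H G" and "d \<ge> 1" and "card (rcosets\<^bsub>G\<^esub> H) = d"
    and "\<alpha> > 0" and "\<beta> > 0"
    and "\<forall>V. finite V \<and> V \<subseteq> H \<and> symmetric_set G V \<and> generate G V = H \<longrightarrow>
           (\<forall>n::nat. real (card (set_power G V n)) \<ge> (\<alpha> * real (card V)) powr (\<beta> * real n))"
  shows "\<forall>n::nat. real (card (set_power G U n)) \<ge>
           (\<alpha> / (2 powr (real (2 * fact d + 1) / \<beta>) * real d) * real (card U))
             powr (\<beta> * real n / real (2 * fact d + 1))"
proof (intro allI)
  fix n :: nat
  interpret group G by fact
  let ?m = "2 * fact d + 1"
  have base: "\<alpha> / (2 powr (real ?m / \<beta>) * real d) * real (card U)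
      = \<alpha> * real (card U) / real d / 2 powr (real ?m / \<beta>)"
    by simp
  show "(\<alpha> / (2 powr (real ?m / \<beta>) * real d) * real (card U)) powr (\<beta> * real n / real ?m)
      \<le> real (card (set_power G U n))"
  proof (cases "U = {}")
    case False
    \<comment> \<open>any \<open>t \<ge> d\<close> would do; the exponent \<open>m = 2 d! + 1\<close> corresponds to \<open>t = d!\<close>\<close>
    obtain V where V: "finite V" "V \<subseteq> H" "symmetric_set G V" "generate G V = H"
        "card U \<le> d * card V"
        "card (set_power G V n) \<le> (?m * n + 1) * card (set_power G U n) ^ ?m"
      using finite_index_subgroup_short_generators[OF assms(2,3) False assms(4-6,8,7) fact_ge_self]
      by metis
    have "\<alpha> * card U / d \<le> \<alpha> * card V"
      using V(5) assms(7,9) by (simp add: field_simps flip: of_nat_mult)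
    then have "(\<alpha> * card U / d) powr (\<beta> * n) \<le> (\<alpha> * card V) powr (\<beta> * n)"
      using assms(9,10) by (intro powr_mono2) auto
    also have "\<dots> \<le> card (set_power G V n)" using assms(11) V(1-4) by blast
    also have "\<dots> \<le> real (?m * n + 1) * card (set_power G U n) ^ ?m"
      using of_nat_mono[OF V(6), where 'a = real] by (simp only: of_nat_mult of_nat_power)
    finally show ?thesis
      unfolding base using assms(9,10)
      by (intro powr_root_le_of_powr_le) auto
  qed simp
qed

end
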